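(* Let $k\ge3$, $1\le s\le k$, $\mathbf n=(n_1,\dots,n_k)$, $r\le\min\{n_1,\dots,n_s\}$. For every $\mathcal A\in P_s(\mathbf n,r)$, $\operatorname{rank}(\mathcal A)=\operatorname{rank}(A_1)$, where $A_1\in\mathbb R^{n_1\times\prod_{i=2}^kn_i}$ is the flattening (matricization) of $\mathcal A$ with respect to its first factor.
   Context: $P_s(\mathbf n,r)$ is the set of tensors $\sum_{i=1}^r\sigma_i\mathbf a^{(1)}_i\otimes\cdots\otimes\mathbf a^{(k)}_i$ with $\sigma_i\in\mathbb R$, all $\mathbf a^{(l)}_i\in\mathbb R^{n_l}$ unit vectors, and for each $l\le s$ the vectors $\mathbf a^{(l)}_1,\dots,\mathbf a^{(l)}_r$ pairwise orthogonal. $\operatorname{rank}(\mathcal A)$ is the CP rank (least number of rank-one tensors summing to $\mathcal A$). *)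

theory Defs
  imports "Jordan_Normal_Form.DL_Rank"
begin

text \<open>Order-k real tensors with dimension list ns = [n_1,...,n_k] (k = length ns) are
  represented as functions from index lists to reals; only valid index lists matter.
  Modes are numbered 0..k-1 (paper: 1..k). Vectors in R^m are functions nat => real
  of which only entries j < m matter.\<close>

definition valid_index :: "nat list \<Rightarrow> nat list \<Rightarrow> bool" where
  "valid_index ns is \<longleftrightarrow> length is = length ns \<and> (\<forall>l<length ns. is ! l < ns ! l)"

definition cp_rank :: "nat list \<Rightarrow> (nat list \<Rightarrow> real) \<Rightarrow> nat" where
  "cp_rank ns T = (LEAST R. \<exists>a :: nat \<Rightarrow> nat \<Rightarrow> nat \<Rightarrow> real.
      \<forall>is. valid_index ns is \<longrightarrow> T is = (\<Sum>i<R. \<Prod>l<length ns. a i l (is ! l)))"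

definition P_set :: "nat \<Rightarrow> nat list \<Rightarrow> nat \<Rightarrow> (nat list \<Rightarrow> real) set" where
  "P_set s ns r = {T. \<exists>(\<sigma> :: nat \<Rightarrow> real) (a :: nat \<Rightarrow> nat \<Rightarrow> nat \<Rightarrow> real).
      (\<forall>i<r. \<forall>l<length ns. (\<Sum>j<ns ! l. (a i l j)\<^sup>2) = 1) \<and>
      (\<forall>l<s. \<forall>i<r. \<forall>i'<r. i \<noteq> i' \<longrightarrow> (\<Sum>j<ns ! l. a i l j * a i' l j) = 0) \<and>
      (\<forall>is. valid_index ns is \<longrightarrow> T is = (\<Sum>i<r. \<sigma> i * (\<Prod>l<length ns. a i l (is ! l))))}"

text \<open>Mixed-radix decoding of a column index of the mode-1 flattening into the
  remaining tensor indices (first remaining index varies fastest).\<close>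
fun unflat :: "nat list \<Rightarrow> nat \<Rightarrow> nat list" where
  "unflat [] j = []"
| "unflat (m # ms) j = (j mod m) # unflat ms (j div m)"

definition flatten1 :: "nat list \<Rightarrow> (nat list \<Rightarrow> real) \<Rightarrow> real mat" where
  "flatten1 ns T = mat (hd ns) (prod_list (tl ns)) (\<lambda>(i, j). T (i # unflat (tl ns) j))"

end

theory Submission
  imports Defs
begin

text \<open>Write the flattening as \<open>A\<^sub>1 = \<Sum>\<^sub>i a\<^sub>i e\<^sub>i\<^sup>T\<close>, where \<open>a\<^sub>i\<close> is the first-mode factor of the
  \<open>i\<close>-th term and \<open>e\<^sub>i\<close> the flattened product of its remaining factors (with the weight \<open>\<sigma>\<^sub>i\<close>).
  Any CP decomposition flattens to a sum of as many rank-one matrices, so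
  \<open>rank A\<^sub>1 \<le> rank A\<close>. Conversely, orthonormality of the \<open>a\<^sub>i\<close> gives \<open>e\<^sub>i = A\<^sub>1\<^sup>T a\<^sub>i\<close>. Hence each
  \<open>e\<^sub>i\<close> is determined by its entries in a set \<open>C\<close> of \<open>rank A\<^sub>1\<close> columns spanning all columns,
  so at most \<open>|C|\<close> of the \<open>e\<^sub>i\<close> span all the others. Regrouping the sum over such a
  subfamily gives a CP decomposition with at most \<open>rank A\<^sub>1\<close> terms.\<close>

definition outer_sum :: "nat \<Rightarrow> nat \<Rightarrow> ('i \<Rightarrow> nat \<Rightarrow> 'a::field) \<Rightarrow> ('i \<Rightarrow> nat \<Rightarrow> 'a) \<Rightarrow> 'i set \<Rightarrow> 'a mat"
  where "outer_sum n N g h I = mat n N (\<lambda>(x, j). \<Sum>i\<in>I. g i x * h i j)"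

lemma outer_sum_carrier: "outer_sum n N g h I \<in> carrier_mat n N"
  by (simp add: outer_sum_def)

lemma outer_sum_index: "x < n \<Longrightarrow> j < N \<Longrightarrow> outer_sum n N g h I $$ (x, j) = (\<Sum>i\<in>I. g i x * h i j)"
  by (simp add: outer_sum_def)

lemma rank_outer_sum_le:
  assumes "finite I"
  shows "vec_space.rank n (outer_sum n N g h I) \<le> card I"
  using assms
proof (induction I rule: finite_induct)
  case empty
  have "outer_sum n N g h {} = 0\<^sub>m n N"
    by (rule eq_matI) (auto simp: outer_sum_def)
  then show ?case by (simp add: vec_space.rank_0I)
next
  case (insert i I)
  define P where "P = mat n N (\<lambda>(x, j). g i x * h i j)"
  have "outer_sum n N g h (insert i I) = outer_sum n N g h I + P"
    by (rule eq_matI) (use insert.hyps in \<open>auto simp: outer_sum_def P_def\<close>)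
  moreover have "vec_space.rank n P \<le> 1"
    by (rule vec_space.rank_le_1_product_entries[of P n N "g i" "h i"]) (auto simp: P_def)
  moreover have "vec_space.rank n (outer_sum n N g h I + P)
      \<le> vec_space.rank n (outer_sum n N g h I) + vec_space.rank n P"
    by (rule vec_space.rank_subadditive[of _ n N]) (simp_all add: outer_sum_carrier P_def)
  ultimately show ?case using insert by simp
qed

lemma (in vec_space) lin_indpt_spanning_subset:
  assumes W: "W \<subseteq> carrier_vec n" and "finite W"
  shows "\<exists>U\<subseteq>W. lin_indpt U \<and> card U \<le> n \<and>
           (\<forall>v\<in>W. \<exists>c. \<forall>x<n. v $ x = (\<Sum>u\<in>U. c u * u $ x))"
proof -
  have "lin_indpt {}"
    by (metis empty_subsetI fin_dim finite_basis_exists subset_li_is_li vec_vs vectorspace.basis_def)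
  then obtain U where "finite U" and U_max: "maximal U (\<lambda>T. T \<subseteq> W \<and> lin_indpt T)"
    using maximal_exists_superset[of W "\<lambda>T. T \<subseteq> W \<and> lin_indpt T" "{}"] \<open>finite W\<close> by blast
  then have "U \<subseteq> W" and U_li: "lin_indpt U" unfolding maximal_def by auto
  then have U_carrier: "U \<subseteq> carrier_vec n" using W by auto
  have "card U \<le> n"
    using li_le_dim(2)[OF fin_dim _ U_li] U_carrier dim_is_n by auto
  moreover have "\<exists>c. \<forall>x<n. v $ x = (\<Sum>u\<in>U. c u * u $ x)" if "v \<in> W" for v
  proof (cases "v \<in> U")
    case True
    then have "\<forall>x<n. v $ x = (\<Sum>u\<in>U. of_bool (u = v) * u $ x)"
      by (simp add: sum.remove[OF \<open>finite U\<close> True])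
    then show ?thesis by (rule exI[of _ "\<lambda>u. of_bool (u = v)"])
  next
    case False
    have "lin_dep (insert v U)"
    proof (rule ccontr)
      assume "lin_indpt (insert v U)"
      moreover have "insert v U \<subseteq> W" using \<open>U \<subseteq> W\<close> \<open>v \<in> W\<close> by simp
      ultimately have "insert v U = U" using U_max unfolding maximal_def by blast
      then show False using False by blast
    qed
    then have "v \<in> span U"
      using lin_dep_iff_in_span[OF U_carrier U_li _ False] \<open>v \<in> W\<close> W by auto
    then obtain c V where v: "v = lincomb c V" "finite V" "V \<subseteq> U" using in_spanE by blast
    have "\<forall>x<n. v $ x = (\<Sum>u\<in>U. (if u \<in> V then c u else 0) * u $ x)"
    proof (intro allI impI)
      fix x assume "x < n"
      have "v $ x = (\<Sum>u\<in>V. c u * u $ x)" using lincomb_index[OF \<open>x < n\<close>] v U_carrier by auto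
      also have "\<dots> = (\<Sum>u\<in>U. (if u \<in> V then c u else 0) * u $ x)"
        by (rule sum.mono_neutral_cong_left) (use \<open>finite U\<close> v in auto)
      finally show "v $ x = (\<Sum>u\<in>U. (if u \<in> V then c u else 0) * u $ x)" .
    qed
    then show ?thesis by (rule exI[of _ "\<lambda>u. if u \<in> V then c u else 0"])
  qed
  ultimately show ?thesis using \<open>U \<subseteq> W\<close> U_li by blast
qed

lemma (in vec_space) spanning_subfamily:
  assumes "v ` I \<subseteq> carrier_vec n" and "finite I"
  shows "\<exists>S\<subseteq>I. inj_on v S \<and> lin_indpt (v ` S) \<and> card S \<le> n \<and>
           (\<exists>c. \<forall>i\<in>I. \<forall>x<n. v i $ x = (\<Sum>k\<in>S. c i k * v k $ x))"
proof -
  obtain U where "U \<subseteq> v ` I" "lin_indpt U" "card U \<le> n"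
    and U_span: "\<forall>w\<in>v ` I. \<exists>c. \<forall>x<n. w $ x = (\<Sum>u\<in>U. c u * u $ x)"
    using lin_indpt_spanning_subset[OF assms(1)] \<open>finite I\<close> by blast
  define S where "S = inv_into I v ` U"
  have "S \<subseteq> I" using \<open>U \<subseteq> v ` I\<close> by (auto simp: S_def inv_into_into)
  have "v ` S = U" unfolding S_def using image_inv_into_cancel[OF refl \<open>U \<subseteq> v ` I\<close>] .
  have "inj_on v S"
    by (rule inj_on_inverseI[of _ "inv_into I v"])
      (use \<open>U \<subseteq> v ` I\<close> in \<open>auto simp: S_def f_inv_into_f\<close>)
  have "\<forall>i\<in>I. \<exists>c. \<forall>x<n. v i $ x = (\<Sum>k\<in>S. c k * v k $ x)"
  proof
    fix i assume "i \<in> I"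
    obtain c where "\<forall>x<n. v i $ x = (\<Sum>u\<in>U. c u * u $ x)" using U_span \<open>i \<in> I\<close> by blast
    moreover have "(\<Sum>u\<in>U. c u * u $ x) = (\<Sum>k\<in>S. c (v k) * v k $ x)" for x
      unfolding \<open>v ` S = U\<close>[symmetric] by (simp add: sum.reindex[OF \<open>inj_on v S\<close>])
    ultimately have "\<forall>x<n. v i $ x = (\<Sum>k\<in>S. c (v k) * v k $ x)" by simp
    then show "\<exists>c. \<forall>x<n. v i $ x = (\<Sum>k\<in>S. c k * v k $ x)" by (rule exI[of _ "\<lambda>k. c (v k)"])
  qed
  then have "\<exists>c. \<forall>i\<in>I. \<forall>x<n. v i $ x = (\<Sum>k\<in>S. c i k * v k $ x)" by (rule bchoice)
  moreover have "card S \<le> n" using card_image[OF \<open>inj_on v S\<close>] \<open>v ` S = U\<close> \<open>card U \<le> n\<close> by simp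
  moreover have "lin_indpt (v ` S)" using \<open>v ` S = U\<close> \<open>lin_indpt U\<close> by simp
  ultimately show ?thesis using \<open>S \<subseteq> I\<close> \<open>inj_on v S\<close> by blast
qed

lemma (in vec_space) cols_spanned_by_rank_cols:
  assumes A: "A \<in> carrier_mat n nc"
  shows "\<exists>C\<subseteq>{..<nc}. card C \<le> rank A \<and>
           (\<exists>c. \<forall>j<nc. \<forall>x<n. A $$ (x, j) = (\<Sum>k\<in>C. c j k * A $$ (x, k)))"
proof -
  have "col A ` {..<nc} \<subseteq> carrier_vec n" using A by auto
  then obtain C c where "C \<subseteq> {..<nc}" "inj_on (col A) C" "lin_indpt (col A ` C)"
    and C_span: "\<forall>j\<in>{..<nc}. \<forall>x<n. col A j $ x = (\<Sum>k\<in>C. c j k * col A k $ x)"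
    using spanning_subfamily[of "col A" "{..<nc}"] by blast
  have "col A ` C \<subseteq> set (cols A)" using \<open>C \<subseteq> {..<nc}\<close> A by (auto simp: cols_def)
  then have "card C \<le> rank A"
    using rank_ge_card_indpt[OF A _ \<open>lin_indpt (col A ` C)\<close>] card_image[OF \<open>inj_on (col A) C\<close>] by simp
  moreover have "\<forall>j<nc. \<forall>x<n. A $$ (x, j) = (\<Sum>k\<in>C. c j k * A $$ (x, k))"
    using C_span \<open>C \<subseteq> {..<nc}\<close> A by (auto intro!: sum.cong)
  ultimately show ?thesis using \<open>C \<subseteq> {..<nc}\<close> by blast
qed

lemma spanning_subfamily_functions:
  fixes f :: "'i \<Rightarrow> 'x \<Rightarrow> 'a::field"
  assumes "finite I" and "finite X"
  shows "\<exists>S\<subseteq>I. card S \<le> card X \<and> (\<exists>c. \<forall>i\<in>I. \<forall>x\<in>X. f i x = (\<Sum>k\<in>S. c i k * f k x))"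
proof -
  obtain b where b: "bij_betw b {..<card X} X"
    using ex_bij_betw_nat_finite[OF \<open>finite X\<close>] by (auto simp: atLeast0LessThan)
  define v where "v i = vec (card X) (\<lambda>p. f i (b p))" for i
  have "v ` I \<subseteq> carrier_vec (card X)" by (auto simp: v_def)
  then obtain S c where "S \<subseteq> I" "card S \<le> card X"
    and S_span: "\<forall>i\<in>I. \<forall>p<card X. v i $ p = (\<Sum>k\<in>S. c i k * v k $ p)"
    using vec_space.spanning_subfamily[of v I "card X"] \<open>finite I\<close> by blast
  have "f i x = (\<Sum>k\<in>S. c i k * f k x)" if "i \<in> I" "x \<in> X" for i x
  proof -
    obtain p where "p < card X" "x = b p" using b \<open>x \<in> X\<close> by (auto simp: bij_betw_def)
    then show ?thesis using S_span \<open>i \<in> I\<close> by (simp add: v_def)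
  qed
  then show ?thesis using \<open>S \<subseteq> I\<close> \<open>card S \<le> card X\<close> by blast
qed

lemma outer_sum_regroup:
  assumes "\<forall>i\<in>I. \<forall>j<N. h i j = (\<Sum>k\<in>S. c i k * h k j)"
  shows "outer_sum n N g h I = outer_sum n N (\<lambda>k x. \<Sum>i\<in>I. g i x * c i k) h S"
proof (rule eq_matI)
  fix x j assume "x < dim_row (outer_sum n N (\<lambda>k x. \<Sum>i\<in>I. g i x * c i k) h S)"
    "j < dim_col (outer_sum n N (\<lambda>k x. \<Sum>i\<in>I. g i x * c i k) h S)"
  then have "x < n" "j < N" by (auto simp: outer_sum_def)
  have "(\<Sum>i\<in>I. g i x * h i j) = (\<Sum>i\<in>I. \<Sum>k\<in>S. g i x * c i k * h k j)"
    using assms \<open>j < N\<close> by (simp add: sum_distrib_left mult.assoc)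
  also have "\<dots> = (\<Sum>k\<in>S. (\<Sum>i\<in>I. g i x * c i k) * h k j)"
    by (subst sum.swap) (simp add: sum_distrib_right)
  finally show "outer_sum n N g h I $$ (x, j) = outer_sum n N (\<lambda>k x. \<Sum>i\<in>I. g i x * c i k) h S $$ (x, j)"
    using \<open>x < n\<close> \<open>j < N\<close> by (simp add: outer_sum_index)
qed (simp_all add: outer_sum_def)

lemma outer_sum_dual_recover:
  fixes g g' h :: "'i \<Rightarrow> nat \<Rightarrow> 'a::field"
  assumes "finite I"
    and dual: "\<And>i i'. i \<in> I \<Longrightarrow> i' \<in> I \<Longrightarrow> (\<Sum>x<n. g' i x * g i' x) = of_bool (i = i')"
    and "i \<in> I" "j < N"
  shows "h i j = (\<Sum>x<n. g' i x * outer_sum n N g h I $$ (x, j))"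
proof -
  have "(\<Sum>x<n. g' i x * outer_sum n N g h I $$ (x, j)) = (\<Sum>x<n. \<Sum>i'\<in>I. g' i x * g i' x * h i' j)"
    using \<open>j < N\<close> by (simp add: outer_sum_index sum_distrib_left mult.assoc)
  also have "\<dots> = (\<Sum>i'\<in>I. of_bool (i = i') * h i' j)"
    using dual \<open>i \<in> I\<close> by (subst sum.swap) (simp add: sum_distrib_right[symmetric])
  also have "\<dots> = (\<Sum>i'\<in>I. if i = i' then h i' j else 0)" by (rule sum.cong) auto
  also have "\<dots> = h i j" using \<open>finite I\<close> \<open>i \<in> I\<close> by simp
  finally show ?thesis by simp
qed

lemma outer_sum_reduce_to_rank:
  fixes g g' h :: "'i \<Rightarrow> nat \<Rightarrow> 'a::field"
  assumes "finite I"
    and dual: "\<And>i i'. i \<in> I \<Longrightarrow> i' \<in> I \<Longrightarrow> (\<Sum>x<n. g' i x * g i' x) = of_bool (i = i')"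
  shows "\<exists>S\<subseteq>I. card S \<le> vec_space.rank n (outer_sum n N g h I) \<and>
           (\<exists>f. outer_sum n N g h I = outer_sum n N f h S)"
proof -
  define M where "M = outer_sum n N g h I"
  have recover: "h i j = (\<Sum>x<n. g' i x * M $$ (x, j))" if "i \<in> I" "j < N" for i j
    unfolding M_def using outer_sum_dual_recover[OF assms that] .
  have "\<exists>C\<subseteq>{..<N}. card C \<le> vec_space.rank n M \<and>
      (\<exists>\<mu>. \<forall>j<N. \<forall>x<n. M $$ (x, j) = (\<Sum>k\<in>C. \<mu> j k * M $$ (x, k)))"
    unfolding M_def by (rule vec_space.cols_spanned_by_rank_cols[OF outer_sum_carrier])
  then obtain C \<mu> where "C \<subseteq> {..<N}" "card C \<le> vec_space.rank n M"
    and C_span: "\<forall>j<N. \<forall>x<n. M $$ (x, j) = (\<Sum>k\<in>C. \<mu> j k * M $$ (x, k))"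
    by blast
  have h_C: "h i j = (\<Sum>k\<in>C. \<mu> j k * h i k)" if "i \<in> I" "j < N" for i j
  proof -
    have "h i j = (\<Sum>x<n. \<Sum>k\<in>C. \<mu> j k * (g' i x * M $$ (x, k)))"
      using recover[OF that] C_span \<open>j < N\<close> by (simp add: sum_distrib_left mult.left_commute)
    also have "\<dots> = (\<Sum>k\<in>C. \<mu> j k * (\<Sum>x<n. g' i x * M $$ (x, k)))"
      by (subst sum.swap) (simp add: sum_distrib_left)
    also have "\<dots> = (\<Sum>k\<in>C. \<mu> j k * h i k)"
      using recover \<open>i \<in> I\<close> \<open>C \<subseteq> {..<N}\<close> by (auto intro!: sum.cong)
    finally show ?thesis .
  qed
  obtain S c where "S \<subseteq> I" "card S \<le> card C"
    and S_span: "\<forall>i\<in>I. \<forall>k\<in>C. h i k = (\<Sum>v\<in>S. c i v * h v k)"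
    using spanning_subfamily_functions[OF \<open>finite I\<close>, of C h] \<open>C \<subseteq> {..<N}\<close> finite_subset by blast
  have "h i j = (\<Sum>v\<in>S. c i v * h v j)" if "i \<in> I" "j < N" for i j
  proof -
    have "h i j = (\<Sum>k\<in>C. \<Sum>v\<in>S. c i v * (\<mu> j k * h v k))"
      using h_C[OF that] S_span \<open>i \<in> I\<close> by (simp add: sum_distrib_left mult.left_commute)
    also have "\<dots> = (\<Sum>v\<in>S. c i v * (\<Sum>k\<in>C. \<mu> j k * h v k))"
      by (subst sum.swap) (simp add: sum_distrib_left)
    also have "\<dots> = (\<Sum>v\<in>S. c i v * h v j)"
    proof (rule sum.cong)
      fix v assume "v \<in> S"
      then show "c i v * (\<Sum>k\<in>C. \<mu> j k * h v k) = c i v * h v j"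
        using h_C[of v j] \<open>S \<subseteq> I\<close> \<open>j < N\<close> by auto
    qed simp
    finally show ?thesis .
  qed
  then have "M = outer_sum n N (\<lambda>k x. \<Sum>i\<in>I. g i x * c i k) h S"
    unfolding M_def by (intro outer_sum_regroup) blast
  moreover have "card S \<le> vec_space.rank n M"
    using \<open>card S \<le> card C\<close> \<open>card C \<le> vec_space.rank n M\<close> by simp
  ultimately show ?thesis using \<open>S \<subseteq> I\<close> unfolding M_def by blast
qed

lemma valid_index_Cons_Cons: "valid_index (m # ms) (x # t) \<longleftrightarrow> x < m \<and> valid_index ms t"
  by (auto simp: valid_index_def less_Suc_eq_0_disj)

lemma valid_index_Cons:
  "valid_index (m # ms) is \<longleftrightarrow> (\<exists>x t. is = x # t \<and> x < m \<and> valid_index ms t)"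
  by (cases "is") (auto simp: valid_index_Cons_Cons, simp add: valid_index_def)

lemma valid_index_unflat: "j < prod_list ms \<Longrightarrow> valid_index ms (unflat ms j)"
proof (induction ms arbitrary: j)
  case Nil
  then show ?case by (simp add: valid_index_def)
next
  case (Cons m ms)
  then have "0 < m" and "j div m < prod_list ms"
    by (auto simp: less_mult_imp_div_less mult.commute intro: gr0I)
  then show ?case using Cons.IH by (simp add: valid_index_Cons_Cons)
qed

lemma unflat_surj: "valid_index ms t \<Longrightarrow> \<exists>j<prod_list ms. unflat ms j = t"
proof (induction ms arbitrary: t)
  case Nil
  then show ?case by (simp add: valid_index_def)
next
  case (Cons m ms)
  then obtain x t' where t: "t = x # t'" "x < m" "valid_index ms t'" by (auto simp: valid_index_Cons)
  then obtain j' where j': "j' < prod_list ms" "unflat ms j' = t'" using Cons.IH by blast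
  have "x + m * j' < m * prod_list ms"
  proof -
    have "x + m * j' < m * Suc j'" using t(2) by simp
    also have "\<dots> \<le> m * prod_list ms" using j'(1) by (intro mult_le_mono2) simp
    finally show ?thesis .
  qed
  moreover have "unflat (m # ms) (x + m * j') = t" using t j' by simp
  ultimately show ?case by auto
qed

lemma flatten1_index:
  "x < m \<Longrightarrow> j < prod_list ms \<Longrightarrow> flatten1 (m # ms) T $$ (x, j) = T (x # unflat ms j)"
  by (simp add: flatten1_def)

lemma flatten1_eq_iff:
  "flatten1 (m # ms) T = flatten1 (m # ms) T' \<longleftrightarrow> (\<forall>is. valid_index (m # ms) is \<longrightarrow> T is = T' is)"
proof
  assume eq: "flatten1 (m # ms) T = flatten1 (m # ms) T'"
  show "\<forall>is. valid_index (m # ms) is \<longrightarrow> T is = T' is"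
  proof (intro allI impI)
    fix "is" assume "valid_index (m # ms) is"
    then obtain x t where "is = x # t" "x < m" "valid_index ms t" by (auto simp: valid_index_Cons)
    moreover obtain j where "j < prod_list ms" "unflat ms j = t" using unflat_surj \<open>valid_index ms t\<close> by blast
    ultimately show "T is = T' is" using eq flatten1_index by metis
  qed
next
  assume "\<forall>is. valid_index (m # ms) is \<longrightarrow> T is = T' is"
  then show "flatten1 (m # ms) T = flatten1 (m # ms) T'"
    by (intro eq_matI) (auto simp: flatten1_def valid_index_Cons_Cons valid_index_unflat)
qed

lemma flatten1_weighted_cp_sum:
  "flatten1 (m # ms) (\<lambda>is. \<Sum>i\<in>I. \<sigma> i * (\<Prod>l<length (m # ms). a i l (is ! l))) =
   outer_sum m (prod_list ms) (\<lambda>i. a i 0) (\<lambda>i j. \<sigma> i * (\<Prod>l<length ms. a i (Suc l) (unflat ms j ! l))) I"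
  by (rule eq_matI)
    (simp_all add: flatten1_def outer_sum_def prod.lessThan_Suc_shift mult_ac del: prod.lessThan_Suc)

definition cp_decomp :: "nat list \<Rightarrow> (nat list \<Rightarrow> real) \<Rightarrow> nat \<Rightarrow> bool" where
  "cp_decomp ns T R \<longleftrightarrow> (\<exists>a :: nat \<Rightarrow> nat \<Rightarrow> nat \<Rightarrow> real.
      \<forall>is. valid_index ns is \<longrightarrow> T is = (\<Sum>i<R. \<Prod>l<length ns. a i l (is ! l)))"

lemma cp_rank_le: "cp_decomp ns T R \<Longrightarrow> cp_rank ns T \<le> R"
  unfolding cp_rank_def cp_decomp_def by (rule Least_le)

lemma cp_decomp_cp_rank: "cp_decomp ns T R \<Longrightarrow> cp_decomp ns T (cp_rank ns T)"
  unfolding cp_rank_def cp_decomp_def by (rule LeastI)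

lemma cp_decomp_weighted:
  fixes \<sigma> :: "'i \<Rightarrow> real" and a :: "'i \<Rightarrow> nat \<Rightarrow> nat \<Rightarrow> real"
  assumes "finite S" and "ns \<noteq> []"
    and T: "\<forall>is. valid_index ns is \<longrightarrow> T is = (\<Sum>v\<in>S. \<sigma> v * (\<Prod>l<length ns. a v l (is ! l)))"
  shows "cp_decomp ns T (card S)"
proof -
  obtain b where b: "bij_betw b {..<card S} S"
    using ex_bij_betw_nat_finite[OF \<open>finite S\<close>] by (auto simp: atLeast0LessThan)
  define a' where "a' i l = (if l = 0 then (\<lambda>y. \<sigma> (b i) * a (b i) 0 y) else a (b i) l)" for i l
  obtain k where k: "length ns = Suc k" using \<open>ns \<noteq> []\<close> by (cases ns) auto
  have "(\<Prod>l<length ns. a' i l (is ! l)) = \<sigma> (b i) * (\<Prod>l<length ns. a (b i) l (is ! l))" for i "is"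
    unfolding k by (simp add: prod.lessThan_Suc_shift a'_def del: prod.lessThan_Suc)
  then have "(\<Sum>i<card S. \<Prod>l<length ns. a' i l (is ! l)) = (\<Sum>v\<in>S. \<sigma> v * (\<Prod>l<length ns. a v l (is ! l)))"
    for "is" using sum.reindex_bij_betw[OF b, of "\<lambda>v. \<sigma> v * (\<Prod>l<length ns. a v l (is ! l))"] by simp
  then show ?thesis unfolding cp_decomp_def using T by metis
qed

lemma rank_flatten1_le_cp_rank:
  assumes "cp_decomp (m # ms) T R"
  shows "vec_space.rank m (flatten1 (m # ms) T) \<le> cp_rank (m # ms) T"
proof -
  obtain a where "\<forall>is. valid_index (m # ms) is \<longrightarrow>
      T is = (\<Sum>i<cp_rank (m # ms) T. 1 * (\<Prod>l<length (m # ms). a i l (is ! l)))"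
    using cp_decomp_cp_rank[OF assms] unfolding cp_decomp_def by auto
  then have "flatten1 (m # ms) T = flatten1 (m # ms)
      (\<lambda>is. \<Sum>i<cp_rank (m # ms) T. 1 * (\<Prod>l<length (m # ms). a i l (is ! l)))"
    by (simp only: flatten1_eq_iff)
  also have "\<dots> = outer_sum m (prod_list ms) (\<lambda>i. a i 0)
      (\<lambda>i j. 1 * (\<Prod>l<length ms. a i (Suc l) (unflat ms j ! l))) {..<cp_rank (m # ms) T}"
    by (rule flatten1_weighted_cp_sum)
  finally show ?thesis using rank_outer_sum_le[of "{..<cp_rank (m # ms) T}"] by simp
qed

lemma ex_cp_decomp_le_rank_flatten1:
  fixes \<sigma> :: "'i \<Rightarrow> real" and a :: "'i \<Rightarrow> nat \<Rightarrow> nat \<Rightarrow> real"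
  assumes "finite I"
    and orthonormal: "\<And>i i'. i \<in> I \<Longrightarrow> i' \<in> I \<Longrightarrow> (\<Sum>x<m. a i 0 x * a i' 0 x) = of_bool (i = i')"
    and T: "\<forall>is. valid_index (m # ms) is \<longrightarrow> T is = (\<Sum>i\<in>I. \<sigma> i * (\<Prod>l<length (m # ms). a i l (is ! l)))"
  shows "\<exists>R \<le> vec_space.rank m (flatten1 (m # ms) T). cp_decomp (m # ms) T R"
proof -
  define h where "h = (\<lambda>i j. \<sigma> i * (\<Prod>l<length ms. a i (Suc l) (unflat ms j ! l)))"
  have "flatten1 (m # ms) T =
      flatten1 (m # ms) (\<lambda>is. \<Sum>i\<in>I. \<sigma> i * (\<Prod>l<length (m # ms). a i l (is ! l)))"
    using T by (simp only: flatten1_eq_iff)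
  also have "\<dots> = outer_sum m (prod_list ms) (\<lambda>i. a i 0) h I"
    unfolding h_def by (rule flatten1_weighted_cp_sum)
  finally have "flatten1 (m # ms) T = outer_sum m (prod_list ms) (\<lambda>i. a i 0) h I" .
  then obtain S f where "S \<subseteq> I" and card_S: "card S \<le> vec_space.rank m (flatten1 (m # ms) T)"
    and S_eq: "flatten1 (m # ms) T = outer_sum m (prod_list ms) f h S"
    using outer_sum_reduce_to_rank[OF \<open>finite I\<close> orthonormal] by metis
  define b where "b v l = (if l = 0 then f v else a v l)" for v l
  have "flatten1 (m # ms) T = outer_sum m (prod_list ms) (\<lambda>v. b v 0)
      (\<lambda>v j. \<sigma> v * (\<Prod>l<length ms. b v (Suc l) (unflat ms j ! l))) S"
    unfolding S_eq h_def by (simp add: b_def)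
  also have "\<dots> = flatten1 (m # ms) (\<lambda>is. \<Sum>v\<in>S. \<sigma> v * (\<Prod>l<length (m # ms). b v l (is ! l)))"
    by (rule flatten1_weighted_cp_sum[symmetric])
  finally have "\<forall>is. valid_index (m # ms) is \<longrightarrow>
      T is = (\<Sum>v\<in>S. \<sigma> v * (\<Prod>l<length (m # ms). b v l (is ! l)))"
    by (simp only: flatten1_eq_iff)
  then have "cp_decomp (m # ms) T (card S)"
    by (rule cp_decomp_weighted[OF finite_subset[OF \<open>S \<subseteq> I\<close> \<open>finite I\<close>] list.simps(3)])
  then show ?thesis using card_S by blast
qed

theorem proposition3p4:
  fixes ns :: "nat list" and s r :: nat and A :: "nat list \<Rightarrow> real"
  assumes "length ns \<ge> 3"
    and "1 \<le> s" and "s \<le> length ns"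
    and "\<forall>l<s. r \<le> ns ! l"
    and "A \<in> P_set s ns r"
  shows "cp_rank ns A = vec_space.rank (ns ! 0) (flatten1 ns A)"
proof -
  obtain m ms where ns: "ns = m # ms" using assms(1) by (cases ns) auto
  obtain \<sigma> a where unit: "\<forall>i<r. \<forall>l<length ns. (\<Sum>j<ns ! l. (a i l j)\<^sup>2) = 1"
    and orth: "\<forall>l<s. \<forall>i<r. \<forall>i'<r. i \<noteq> i' \<longrightarrow> (\<Sum>j<ns ! l. a i l j * a i' l j) = 0"
    and A: "\<forall>is. valid_index ns is \<longrightarrow> A is = (\<Sum>i<r. \<sigma> i * (\<Prod>l<length ns. a i l (is ! l)))"
    using assms(5) unfolding P_set_def by blast
  have "(\<Sum>x<m. a i 0 x * a i' 0 x) = of_bool (i = i')" if "i \<in> {..<r}" "i' \<in> {..<r}" for i i'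
    using unit[rule_format, of i 0] orth[rule_format, of 0 i i'] that \<open>1 \<le> s\<close>
    by (cases "i = i'") (auto simp: ns power2_eq_square)
  then obtain R where "R \<le> vec_space.rank m (flatten1 ns A)" and "cp_decomp ns A R"
    using ex_cp_decomp_le_rank_flatten1[of "{..<r}"] A unfolding ns by blast
  then have "cp_rank ns A \<le> vec_space.rank (ns ! 0) (flatten1 ns A)"
    using cp_rank_le ns by fastforce
  moreover have "vec_space.rank (ns ! 0) (flatten1 ns A) \<le> cp_rank ns A"
    using rank_flatten1_le_cp_rank \<open>cp_decomp ns A R\<close> unfolding ns by simp
  ultimately show ?thesis by simp
qed

end
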